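(* Let $\Lambda\subseteq\mathbb{Z}^n$ be an antichain lattice and $A$ a generic $\Lambda$-finite set. Then for each $i$, $N_i(A)$ is a $\Lambda$-finite set under the action $N_i(A)\times\Lambda\to N_i(A)$, $(\sigma,\lambda)\mapsto\sigma+\lambda$; i.e. $N_i(A)+\Lambda=N_i(A)$ and $N_i(A)$ consists of finitely many $\Lambda$-orbits.
   Context: Notation: $\le,\ll,\vee$ componentwise on $\mathbb{Z}^n$; an antichain lattice is a subgroup of $\mathbb{Z}^n$ whose distinct elements are pairwise incomparable. $T_\eta=\eta-\mathbb{N}^n$, $T^o_\eta=\{\beta:\beta\ll\eta\}$; the $X$-face ($\emptyset\ne X\subseteq[n]$) of $T_\eta$ is $\{\alpha\in T_\eta:\alpha_i=\eta_i\ \forall i\in X\}$. $A$ is generic if whenever $T^o_\eta\cap A=\emptyset$, each face of $T_\eta$ contains at most one point of $A$. $A$ is $\Lambda$-finite if $A=A+\Lambda$ and there is a finite $A_0\subseteq A$ with $A=A_0+\Lambda$. $N_i(A)$ is the set of strongly neighborly subsets $\sigma\subseteq A$ with $|\sigma|=i+1$, where $\sigma$ is strongly neighborly if $\sigma'\subseteq A$, $\vee\sigma'=\vee\sigma$ imply $\sigma'=\sigma$; $\sigma+\lambda=\{\alpha+\lambda:\alpha\in\sigma\}$. *)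

theory Defs
  imports Main "HOL-Library.Function_Algebras"
begin

text \<open>Points of Z^n are functions 'n \<Rightarrow> int for a finite index type 'n.
  The order on functions is componentwise (le_fun).\<close>

type_synonym 'n zvec = "'n \<Rightarrow> int"

definition strictly_below :: "('n::finite) zvec \<Rightarrow> 'n zvec \<Rightarrow> bool" (infix "\<lless>" 50) where
  "\<beta> \<lless> \<eta> \<longleftrightarrow> (\<forall>i. \<beta> i < \<eta> i)"

definition antichain_lattice :: "('n::finite) zvec set \<Rightarrow> bool" where
  "antichain_lattice L \<longleftrightarrow>
     0 \<in> L \<and> (\<forall>x\<in>L. \<forall>y\<in>L. x + y \<in> L) \<and> (\<forall>x\<in>L. - x \<in> L) \<and>
     (\<forall>x\<in>L. \<forall>y\<in>L. x \<noteq> y \<longrightarrow> \<not> x \<le> y)"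

definition T_cone :: "('n::finite) zvec \<Rightarrow> 'n zvec set" where
  "T_cone \<eta> = {\<alpha>. \<alpha> \<le> \<eta>}"

definition T_open :: "('n::finite) zvec \<Rightarrow> 'n zvec set" where
  "T_open \<eta> = {\<beta>. \<beta> \<lless> \<eta>}"

definition face :: "('n::finite) zvec \<Rightarrow> 'n set \<Rightarrow> 'n zvec set" where
  "face \<eta> X = {\<alpha> \<in> T_cone \<eta>. \<forall>i\<in>X. \<alpha> i = \<eta> i}"

definition generic :: "('n::finite) zvec set \<Rightarrow> bool" where
  "generic A \<longleftrightarrow> (\<forall>\<eta>. T_open \<eta> \<inter> A = {} \<longrightarrow>
      (\<forall>X. X \<noteq> {} \<longrightarrow> (\<forall>\<alpha>\<in>face \<eta> X \<inter> A. \<forall>\<beta>\<in>face \<eta> X \<inter> A. \<alpha> = \<beta>)))"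

definition translate :: "('n::finite) zvec set \<Rightarrow> 'n zvec \<Rightarrow> 'n zvec set" where
  "translate \<sigma> l = (\<lambda>\<alpha>. \<alpha> + l) ` \<sigma>"

definition Lambda_finite :: "('n::finite) zvec set \<Rightarrow> 'n zvec set \<Rightarrow> bool" where
  "Lambda_finite L A \<longleftrightarrow>
     {a + l | a l. a \<in> A \<and> l \<in> L} = A \<and>
     (\<exists>A0. finite A0 \<and> A0 \<subseteq> A \<and> A = {a + l | a l. a \<in> A0 \<and> l \<in> L})"

definition join :: "('n::finite) zvec set \<Rightarrow> 'n zvec" where
  "join \<sigma> = (\<lambda>i. Max ((\<lambda>a. a i) ` \<sigma>))"

definition strongly_neighborly :: "('n::finite) zvec set \<Rightarrow> 'n zvec set \<Rightarrow> bool" where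
  "strongly_neighborly A \<sigma> \<longleftrightarrow> \<sigma> \<subseteq> A \<and> finite \<sigma> \<and> \<sigma> \<noteq> {} \<and>
     (\<forall>\<sigma>'. \<sigma>' \<subseteq> A \<and> finite \<sigma>' \<and> \<sigma>' \<noteq> {} \<and> join \<sigma>' = join \<sigma> \<longrightarrow> \<sigma>' = \<sigma>)"

definition N_faces :: "nat \<Rightarrow> ('n::finite) zvec set \<Rightarrow> 'n zvec set set" where
  "N_faces i A = {\<sigma>. strongly_neighborly A \<sigma> \<and> card \<sigma> = i + 1}"

end

theory Submission
  imports Defs "HOL.Topological_Spaces"
begin

text \<open>Translation by \<open>\<lambda> \<in> \<Lambda>\<close> is a bijection of \<open>A\<close> preserving joins, so it permutes the
  strongly neighborly sets. For finiteness of the orbits it suffices that only finitely many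
  \<open>\<sigma> \<in> N\<^sub>i(A)\<close> contain a given point \<open>\<alpha>\<close>: two such faces with comparable joins coincide
  (the union of the smaller with the larger has the larger join, hence equals it, and the cards
  agree), so their joins form an antichain above \<open>\<alpha>\<close>, which is finite by Dickson's lemma.\<close>

lemma incseq_subseq_nat:
  fixes s :: "nat \<Rightarrow> nat"
  shows "\<exists>r. strict_mono r \<and> incseq (\<lambda>n. s (r n))"
proof -
  obtain f where f: "strict_mono f" "monoseq (\<lambda>n. s (f n))"
    using seq_monosub by blast
  show ?thesis
  proof (cases "incseq (\<lambda>n. s (f n))")
    case True
    with f(1) show ?thesis by blast
  next
    case False
    with f(2) have dec: "decseq (\<lambda>n. s (f n))"
      unfolding monoseq_def incseq_def decseq_def by blast
    define k where "k = arg_min (\<lambda>n. s (f n)) (\<lambda>_. True)"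
    have min: "s (f k) \<le> s (f n)" for n
      unfolding k_def by (metis arg_min_nat_le)
    \<comment> \<open>A non-increasing sequence of naturals is constant from its minimum on.\<close>
    have "s (f (n + k)) = s (f k)" for n
      using min[of "n + k"] decseqD[OF dec, of k "n + k"] by simp
    moreover have "strict_mono (\<lambda>n. f (n + k))"
      using f(1) by (simp add: strict_mono_def)
    ultimately show ?thesis
      by (intro exI[of _ "\<lambda>n. f (n + k)"]) (simp add: incseq_def)
  qed
qed

lemma incseq_subseq_coordinates:
  fixes s :: "nat \<Rightarrow> 'a \<Rightarrow> nat"
  assumes "finite I"
  shows "\<exists>r. strict_mono r \<and> (\<forall>c\<in>I. incseq (\<lambda>n. s (r n) c))"
  using assms
proof (induction I rule: finite_induct)
  case empty
  show ?case using strict_mono_id by blast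
next
  case (insert c I)
  then obtain r where r: "strict_mono r" "\<forall>c'\<in>I. incseq (\<lambda>n. s (r n) c')"
    by blast
  obtain r' where r': "strict_mono r'" "incseq (\<lambda>n. s (r (r' n)) c)"
    using incseq_subseq_nat[of "\<lambda>n. s (r n) c"] by blast
  have "incseq (\<lambda>n. s (r (r' n)) c')" if "c' \<in> I" for c'
    using r(2) that strict_mono_leD[OF r'(1)] by (simp add: incseq_def)
  with r r' show ?case
    by (intro exI[of _ "\<lambda>n. r (r' n)"]) (auto intro: strict_mono_compose)
qed

lemma finite_antichain_bounded_below:
  fixes V :: "('n::finite \<Rightarrow> int) set"
  assumes lower: "\<forall>v\<in>V. b \<le> v" and antichain: "\<forall>v\<in>V. \<forall>w\<in>V. v \<le> w \<longrightarrow> v = w"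
  shows "finite V"
proof (rule ccontr)
  assume "infinite V"
  then obtain g :: "nat \<Rightarrow> 'n \<Rightarrow> int" where g: "inj g" "range g \<subseteq> V"
    by (auto simp: infinite_iff_countable_subset)
  obtain r :: "nat \<Rightarrow> nat" where r: "strict_mono r" "\<forall>c\<in>UNIV. incseq (\<lambda>n. nat (g (r n) c - b c))"
    using incseq_subseq_coordinates[OF finite_UNIV, of "\<lambda>n c. nat (g n c - b c)"] by blast
  have "g (r 0) \<le> g (r 1)"
  proof (rule le_funI)
    fix c
    have "b c \<le> g (r 0) c" "b c \<le> g (r 1) c"
      using lower g(2) by (blast intro: le_funD)+
    moreover have "nat (g (r 0) c - b c) \<le> nat (g (r 1) c - b c)"
      using incseqD[OF r(2)[rule_format, OF UNIV_I], of 0 1] by simp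
    ultimately show "g (r 0) c \<le> g (r 1) c"
      by arith
  qed
  then have "g (r 0) = g (r 1)"
    using antichain g(2) by blast
  then have "r 0 = r 1"
    using g(1) by (simp add: inj_eq)
  then show False
    using r(1) by (simp add: strict_mono_eq)
qed

lemma translate_translate [simp]: "translate (translate \<sigma> l) m = translate \<sigma> (l + m)"
  unfolding translate_def by (auto simp: image_image add.assoc)

lemma translate_zero [simp]: "translate \<sigma> 0 = \<sigma>"
  unfolding translate_def by simp

lemma translate_mono: "\<sigma> \<subseteq> \<tau> \<Longrightarrow> translate \<sigma> l \<subseteq> translate \<tau> l"
  unfolding translate_def by (rule image_mono)

lemma finite_translate_iff [simp]: "finite (translate \<sigma> l) \<longleftrightarrow> finite \<sigma>"
  unfolding translate_def by (simp add: finite_image_iff inj_on_def)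

lemma translate_empty_iff [simp]: "translate \<sigma> l = {} \<longleftrightarrow> \<sigma> = {}"
  unfolding translate_def by simp

lemma card_translate [simp]: "card (translate \<sigma> l) = card \<sigma>"
  unfolding translate_def by (simp add: card_image inj_on_def)

lemma join_upper: "finite \<sigma> \<Longrightarrow> \<alpha> \<in> \<sigma> \<Longrightarrow> \<alpha> \<le> join \<sigma>"
  unfolding join_def le_fun_def by auto

lemma join_translate:
  assumes "finite \<sigma>" "\<sigma> \<noteq> {}"
  shows "join (translate \<sigma> l) = join \<sigma> + l"
proof
  fix c
  have "Max ((\<lambda>\<alpha>. \<alpha> c + l c) ` \<sigma>) = Max ((\<lambda>\<alpha>. \<alpha> c) ` \<sigma>) + l c"
    using assms by (simp add: mono_def Max_add_commute[symmetric] image_image)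
  then show "join (translate \<sigma> l) c = (join \<sigma> + l) c"
    unfolding join_def translate_def by (simp add: image_image)
qed

lemma join_Un_absorb:
  assumes "finite \<sigma>" "finite \<tau>" "\<tau> \<noteq> {}" "\<forall>\<alpha>\<in>\<sigma>. \<alpha> \<le> join \<tau>"
  shows "join (\<sigma> \<union> \<tau>) = join \<tau>"
proof
  fix c
  have "Max ((\<lambda>\<alpha>. \<alpha> c) ` (\<sigma> \<union> \<tau>)) = Max ((\<lambda>\<alpha>. \<alpha> c) ` \<tau>)"
  proof (rule Max_eqI)
    show "finite ((\<lambda>\<alpha>. \<alpha> c) ` (\<sigma> \<union> \<tau>))"
      using assms by simp
    show "y \<le> Max ((\<lambda>\<alpha>. \<alpha> c) ` \<tau>)" if "y \<in> (\<lambda>\<alpha>. \<alpha> c) ` (\<sigma> \<union> \<tau>)" for y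
      using that assms by (auto simp: join_def le_fun_def)
    show "Max ((\<lambda>\<alpha>. \<alpha> c) ` \<tau>) \<in> (\<lambda>\<alpha>. \<alpha> c) ` (\<sigma> \<union> \<tau>)"
      using Max_in[of "(\<lambda>\<alpha>. \<alpha> c) ` \<tau>"] assms by blast
  qed
  then show "join (\<sigma> \<union> \<tau>) c = join \<tau> c"
    unfolding join_def by simp
qed

lemma strongly_neighborly_translate:
  assumes invariant: "translate A l = A" and \<sigma>: "strongly_neighborly A \<sigma>"
  shows "strongly_neighborly A (translate \<sigma> l)"
  unfolding strongly_neighborly_def
proof (intro conjI allI impI)
  show "translate \<sigma> l \<subseteq> A" "finite (translate \<sigma> l)" "translate \<sigma> l \<noteq> {}"
    using \<sigma> translate_mono[of \<sigma> A l] invariant by (auto simp: strongly_neighborly_def)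
  fix \<sigma>' assume \<sigma>': "\<sigma>' \<subseteq> A \<and> finite \<sigma>' \<and> \<sigma>' \<noteq> {} \<and> join \<sigma>' = join (translate \<sigma> l)"
  have "translate \<sigma>' (- l) \<subseteq> translate (translate A l) (- l)"
    using \<sigma>' invariant translate_mono by metis
  moreover have "join (translate \<sigma>' (- l)) = join \<sigma>"
    using \<sigma> \<sigma>' by (simp add: join_translate strongly_neighborly_def)
  ultimately have "translate \<sigma>' (- l) = \<sigma>"
    using \<sigma> \<sigma>' by (simp add: strongly_neighborly_def)
  then show "\<sigma>' = translate \<sigma> l"
    by (metis translate_translate translate_zero add.left_inverse)
qed

lemma N_faces_translate:
  "translate A l = A \<Longrightarrow> \<sigma> \<in> N_faces i A \<Longrightarrow> translate \<sigma> l \<in> N_faces i A"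
  by (simp add: N_faces_def strongly_neighborly_translate)

lemma N_facesD:
  assumes "\<sigma> \<in> N_faces i A"
  shows "\<sigma> \<subseteq> A" "finite \<sigma>" "\<sigma> \<noteq> {}" "card \<sigma> = i + 1"
    and "\<And>\<sigma>'. \<sigma>' \<subseteq> A \<Longrightarrow> finite \<sigma>' \<Longrightarrow> \<sigma>' \<noteq> {} \<Longrightarrow> join \<sigma>' = join \<sigma> \<Longrightarrow> \<sigma>' = \<sigma>"
  using assms unfolding N_faces_def strongly_neighborly_def by blast+

lemma N_faces_eq_of_join_le:
  assumes \<sigma>: "\<sigma> \<in> N_faces i A" and \<tau>: "\<tau> \<in> N_faces i A" and le: "join \<sigma> \<le> join \<tau>"
  shows "\<sigma> = \<tau>"
proof -
  have "\<forall>\<alpha>\<in>\<sigma>. \<alpha> \<le> join \<tau>"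
    using join_upper[OF N_facesD(2)[OF \<sigma>]] le order_trans by blast
  then have "join (\<sigma> \<union> \<tau>) = join \<tau>"
    using N_facesD(2)[OF \<sigma>] N_facesD(2,3)[OF \<tau>] join_Un_absorb by blast
  then have "\<sigma> \<union> \<tau> = \<tau>"
    using N_facesD[OF \<sigma>] N_facesD[OF \<tau>] by simp
  then show "\<sigma> = \<tau>"
    using N_facesD(2,4)[OF \<sigma>] N_facesD(2,4)[OF \<tau>] by (metis card_subset_eq sup.absorb_iff2)
qed

lemma finite_N_faces_containing: "finite {\<sigma> \<in> N_faces i A. \<alpha> \<in> \<sigma>}"
proof -
  let ?S = "{\<sigma> \<in> N_faces i A. \<alpha> \<in> \<sigma>}"
  have "inj_on join ?S"
  proof (rule inj_onI)
    fix \<sigma> \<tau> assume "\<sigma> \<in> ?S" "\<tau> \<in> ?S" "join \<sigma> = join \<tau>"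
    then show "\<sigma> = \<tau>"
      using N_faces_eq_of_join_le[of \<sigma> i A \<tau>] by simp
  qed
  moreover have "finite (join ` ?S)"
  proof (rule finite_antichain_bounded_below)
    show "\<forall>v\<in>join ` ?S. \<alpha> \<le> v"
      using N_facesD(2) join_upper by blast
    show "\<forall>v\<in>join ` ?S. \<forall>w\<in>join ` ?S. v \<le> w \<longrightarrow> v = w"
      using N_faces_eq_of_join_le by blast
  qed
  ultimately show ?thesis
    using finite_imageD by blast
qed

lemma Lambda_finite_translate_invariant:
  assumes "antichain_lattice L" "Lambda_finite L A" "l \<in> L"
  shows "translate A l = A"
proof -
  have closed: "\<alpha> + m \<in> A" if "\<alpha> \<in> A" "m \<in> L" for \<alpha> m
    using assms(2) that unfolding Lambda_finite_def by blast
  have "- l \<in> L"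
    using assms(1,3) unfolding antichain_lattice_def by blast
  then have "\<alpha> \<in> (\<lambda>\<alpha>. \<alpha> + l) ` A" if "\<alpha> \<in> A" for \<alpha>
    using closed[OF that \<open>- l \<in> L\<close>] by (intro image_eqI[of _ _ "\<alpha> + - l"]) simp_all
  then show ?thesis
    unfolding translate_def using closed assms(3) by blast
qed

lemma N_faces_translate_lattice:
  assumes "antichain_lattice L" "Lambda_finite L A" "\<sigma> \<in> N_faces i A" "l \<in> L"
  shows "translate \<sigma> l \<in> N_faces i A"
  using assms by (intro N_faces_translate Lambda_finite_translate_invariant)

lemma N_faces_subset_orbits_containing:
  assumes lattice: "antichain_lattice L" and finite: "Lambda_finite L A"
    and A0: "A = {\<alpha> + l | \<alpha> l. \<alpha> \<in> A0 \<and> l \<in> L}"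
  shows "N_faces i A \<subseteq> {translate \<sigma> l | \<sigma> l. \<sigma> \<in> (\<Union>\<alpha>\<in>A0. {\<sigma> \<in> N_faces i A. \<alpha> \<in> \<sigma>}) \<and> l \<in> L}"
proof
  fix \<sigma> assume \<sigma>: "\<sigma> \<in> N_faces i A"
  obtain \<alpha> l where \<alpha>: "\<alpha> \<in> A0" "l \<in> L" "\<alpha> + l \<in> \<sigma>"
    using N_facesD(1,3)[OF \<sigma>] A0 by blast
  have "- l \<in> L"
    using lattice \<alpha>(2) unfolding antichain_lattice_def by blast
  then have "translate \<sigma> (- l) \<in> N_faces i A"
    by (rule N_faces_translate_lattice[OF lattice finite \<sigma>])
  moreover have "\<alpha> \<in> translate \<sigma> (- l)"
    using \<alpha>(3) unfolding translate_def by (intro image_eqI[of _ _ "\<alpha> + l"]) simp_all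
  ultimately have "translate \<sigma> (- l) \<in> (\<Union>\<alpha>\<in>A0. {\<sigma> \<in> N_faces i A. \<alpha> \<in> \<sigma>})"
    using \<alpha>(1) by blast
  then show "\<sigma> \<in> {translate \<sigma> l | \<sigma> l. \<sigma> \<in> (\<Union>\<alpha>\<in>A0. {\<sigma> \<in> N_faces i A. \<alpha> \<in> \<sigma>}) \<and> l \<in> L}"
    using \<alpha>(2) by (intro CollectI exI[of _ "translate \<sigma> (- l)"] exI[of _ l]) simp
qed

theorem mainTheorem6:
  fixes L A :: "('n::finite) zvec set" and i :: nat
  assumes "antichain_lattice L" and "generic A" and "Lambda_finite L A"
  shows "{translate \<sigma> l | \<sigma> l. \<sigma> \<in> N_faces i A \<and> l \<in> L} = N_faces i A \<and>
         (\<exists>N0. finite N0 \<and> N0 \<subseteq> N_faces i A \<and>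
            N_faces i A = {translate \<sigma> l | \<sigma> l. \<sigma> \<in> N0 \<and> l \<in> L})"
proof -
  let ?orbits = "\<lambda>M. {translate \<sigma> l | \<sigma> l. \<sigma> \<in> M \<and> l \<in> L}"
  have orbits_in: "?orbits M \<subseteq> N_faces i A" if "M \<subseteq> N_faces i A" for M
    using that by (auto intro: N_faces_translate_lattice[OF assms(1,3)])
  have "0 \<in> L"
    using assms(1) unfolding antichain_lattice_def by blast
  then have "N_faces i A \<subseteq> ?orbits (N_faces i A)"
    using translate_zero by blast
  then have "?orbits (N_faces i A) = N_faces i A"
    using orbits_in by blast
  moreover obtain A0 where A0: "finite A0" "A = {\<alpha> + l | \<alpha> l. \<alpha> \<in> A0 \<and> l \<in> L}"
    using assms(3) unfolding Lambda_finite_def by blast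
  define N0 where "N0 = (\<Union>\<alpha>\<in>A0. {\<sigma> \<in> N_faces i A. \<alpha> \<in> \<sigma>})"
  have N0: "finite N0" "N0 \<subseteq> N_faces i A"
    using A0(1) finite_N_faces_containing unfolding N0_def by auto
  have "N_faces i A = ?orbits N0"
    using N_faces_subset_orbits_containing[OF assms(1,3) A0(2)] orbits_in[OF N0(2)]
    unfolding N0_def by (rule subset_antisym)
  ultimately show ?thesis
    using N0 by blast
qed

end
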